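(* Let $X$ be a shift space, $k\in\mathbb{N}$, and $\mathcal{C}=(C_n)_{n\in\mathbb{N}}$ with $C_n\subseteq\mathcal{L}(X,[1,nk]^d)$ a collection with entropy $h(\mathcal{C})>0$. Let $r\in\mathbb{N}$. Then there is a collection $\mathcal{C}'=(C_n')_{n\in\mathbb{N}}$ with $C_n'\subseteq C_n$ such that $h(\mathcal{C}')=h(\mathcal{C})$ and for all $n$, all $a\in C_n'$ and all $\gamma\in[-r,r]^d\setminus\{\bar 0\}$, $a$ clashes with $\sigma^\gamma(a)$.
   Context: $X\subseteq\mathcal{A}^{\mathbb{Z}^d}$ is closed and shift-invariant ($\mathcal{A}$ finite); $\mathcal{L}(X,B)=\{x|_B:x\in X\}$. For a pattern $a$ on $B$, $\sigma^\gamma(a)$ is the pattern on $B-\gamma$ given by $(\sigma^\gamma a)_\delta=a_{\gamma+\delta}$. Patterns $a,b$ clash if some site $\gamma$ in both domains has $a_\gamma\ne b_\gamma$. The entropy of $\mathcal{C}=(C_n)$ is $h(\mathcal{C})=\liminf_{n\to\infty}(nk)^{-d}\log|C_n|$. *)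

theory Defs
  imports "HOL-Analysis.Analysis" "HOL-Library.Extended_Real" "HOL-Library.Liminf_Limsup"
begin

text \<open>Sites of Z^d are vectors int^'d (d = CARD('d)); configurations over alphabet A are
functions from sites to A; patterns are partial maps whose domain is the shape B.\<close>

definition shift_space :: "'a set \<Rightarrow> ((int^'d) \<Rightarrow> 'a) set \<Rightarrow> bool" where
  "shift_space A X \<longleftrightarrow> finite A \<and>
     closedin (product_topology (\<lambda>_. discrete_topology A) UNIV) X \<and>
     (\<forall>x\<in>X. \<forall>\<gamma>. (\<lambda>\<delta>. x (\<gamma> + \<delta>)) \<in> X)"

definition restr_pat :: "((int^'d) \<Rightarrow> 'a) \<Rightarrow> (int^'d) set \<Rightarrow> ((int^'d) \<rightharpoonup> 'a)" where
  "restr_pat x B = (\<lambda>\<delta>. if \<delta> \<in> B then Some (x \<delta>) else None)"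

definition lang :: "((int^'d) \<Rightarrow> 'a) set \<Rightarrow> (int^'d) set \<Rightarrow> ((int^'d) \<rightharpoonup> 'a) set" where
  "lang X B = {restr_pat x B | x. x \<in> X}"

definition pat_shift :: "int^'d \<Rightarrow> ((int^'d) \<rightharpoonup> 'a) \<Rightarrow> ((int^'d) \<rightharpoonup> 'a)" where
  "pat_shift \<gamma> a = (\<lambda>\<delta>. a (\<gamma> + \<delta>))"

definition clash :: "((int^'d) \<rightharpoonup> 'a) \<Rightarrow> ((int^'d) \<rightharpoonup> 'a) \<Rightarrow> bool" where
  "clash a b \<longleftrightarrow> (\<exists>\<gamma>\<in>dom a \<inter> dom b. a \<gamma> \<noteq> b \<gamma>)"

definition cube :: "int \<Rightarrow> int \<Rightarrow> (int^'d) set" where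
  "cube lo hi = {v. \<forall>i. lo \<le> v$i \<and> v$i \<le> hi}"

definition coll_entropy :: "nat \<Rightarrow> (nat \<Rightarrow> ((int^'d) \<rightharpoonup> 'a) set) \<Rightarrow> ereal" where
  "coll_entropy k C = liminf (\<lambda>n. if C n = {} then (-\<infinity>)
      else ereal (ln (real (card (C n))) / (real (n * k)) ^ CARD('d)))"

end

theory Submission
  imports Defs
begin

text \<open>A pattern on the cube \<open>[lo, hi]^d\<close> that does not clash with its shift by
\<open>\<gamma> \<noteq> 0\<close> is \<open>\<gamma>\<close>-periodic inside the cube, so it is determined by its restriction
to the frame of width \<open>r \<ge> max\<^sub>i |\<gamma>\<^sub>i|\<close> along the boundary: values propagate
inwards in the direction of a nonzero coordinate of \<open>\<gamma>\<close>. For \<open>N = nk\<close> the frame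
has at most \<open>2rdN^(d-1)\<close> sites, so discarding from \<open>C\<^sub>n\<close> every pattern that fails to
clash with some shift in \<open>[-r, r]^d - {0}\<close> removes at most
\<open>(2r+1)^d |A|^(2rdN^(d-1)) = e^o(N^d)\<close> patterns. Since \<open>|C\<^sub>n|\<close> grows like
\<open>e^(hN^d)\<close> with \<open>h > 0\<close>, this does not change the entropy.\<close>

lemma cube_eq_image_PiE: "(cube lo hi :: (int^'d) set) = vec_lambda ` (PiE UNIV (\<lambda>_. {lo..hi}))"
proof
  show "(cube lo hi :: (int^'d) set) \<subseteq> vec_lambda ` (PiE UNIV (\<lambda>_. {lo..hi}))"
  proof
    fix v :: "int^'d" assume "v \<in> cube lo hi"
    then have "(\<lambda>i. v$i) \<in> PiE UNIV (\<lambda>_. {lo..hi})" by (auto simp: cube_def)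
    then show "v \<in> vec_lambda ` (PiE UNIV (\<lambda>_. {lo..hi}))"
      by (metis image_eqI vec_lambda_eta)
  qed
qed (auto simp: cube_def)

lemma finite_cube [simp]: "finite (cube lo hi :: (int^'d) set)"
  by (simp add: cube_eq_image_PiE finite_PiE)

lemma card_cube: "card (cube lo hi :: (int^'d) set) = nat (hi - lo + 1) ^ CARD('d)"
proof -
  have "inj_on vec_lambda (PiE UNIV (\<lambda>_::'d. {lo..hi}))"
    by (auto intro: inj_onI)
  then show ?thesis
    by (simp add: cube_eq_image_PiE card_image card_PiE)
qed

lemma cube_mono: "lo \<le> lo' \<Longrightarrow> hi' \<le> hi \<Longrightarrow> cube lo' hi' \<subseteq> cube lo hi"
  unfolding cube_def using order_trans by fastforce

lemma add_mem_cube: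
  assumes "\<gamma> \<in> cube (- w) w" "\<delta> \<in> cube (lo + w) (hi - w)"
  shows "\<gamma> + \<delta> \<in> cube lo hi"
proof -
  have "lo \<le> \<gamma>$i + \<delta>$i \<and> \<gamma>$i + \<delta>$i \<le> hi" for i
    using assms unfolding cube_def by (smt (verit) mem_Collect_eq)
  then show ?thesis unfolding cube_def by simp
qed

definition cube_frame :: "int \<Rightarrow> int \<Rightarrow> int \<Rightarrow> (int^'d) set" where
  "cube_frame lo hi w = cube lo hi - cube (lo + w) (hi - w)"

lemma diff_power_le_mult:
  fixes x y :: "'a::linordered_idom"
  assumes "0 \<le> y" "y \<le> x"
  shows "x ^ Suc m - y ^ Suc m \<le> of_nat (Suc m) * (x - y) * x ^ m"
proof (induction m)
  case (Suc m)
  have "x ^ Suc (Suc m) - y ^ Suc (Suc m) = x * (x ^ Suc m - y ^ Suc m) + (x - y) * y ^ Suc m"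
    by (simp add: algebra_simps)
  also have "\<dots> \<le> x * (of_nat (Suc m) * (x - y) * x ^ m) + (x - y) * x ^ Suc m"
    using Suc assms by (intro add_mono mult_left_mono power_mono) auto
  also have "\<dots> = of_nat (Suc (Suc m)) * (x - y) * x ^ Suc m"
    by (simp add: algebra_simps)
  finally show ?case .
qed simp

lemma card_cube_frame_le:
  assumes "2 * w \<le> N"
  shows "real (card (cube_frame 1 (int N) (int w) :: (int^'d) set))
           \<le> 2 * real w * CARD('d) * real N ^ (CARD('d) - 1)"
proof -
  define D where "D = CARD('d)"
  have D: "D = Suc (D - 1)" unfolding D_def by simp
  have "card (cube_frame 1 (int N) (int w) :: (int^'d) set) = N ^ D - (N - 2 * w) ^ D"
    using assms unfolding cube_frame_def D_def
    by (simp add: card_Diff_subset cube_mono card_cube nat_diff_distrib nat_mult_distrib)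
  moreover have "(N - 2 * w) ^ D \<le> N ^ D" by (simp add: power_mono)
  ultimately have "real (card (cube_frame 1 (int N) (int w) :: (int^'d) set))
      = real N ^ D - real (N - 2 * w) ^ D"
    by simp
  also have "\<dots> = real N ^ Suc (D - 1) - real (N - 2 * w) ^ Suc (D - 1)"
    by (simp only: D[symmetric])
  also have "\<dots> \<le> real D * (real N - real (N - 2 * w)) * real N ^ (D - 1)"
    by (subst (3) D) (intro diff_power_le_mult; simp)
  finally show ?thesis
    using assms by (simp add: D_def mult_ac)
qed

definition patterns :: "'a set \<Rightarrow> (int^'d) set \<Rightarrow> ((int^'d) \<rightharpoonup> 'a) set" where
  "patterns A B = {restr_pat x B | x. range x \<subseteq> A}"

lemma lang_subset_patterns:
  "shift_space A X \<Longrightarrow> lang X B \<subseteq> patterns A B"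
  unfolding shift_space_def lang_def patterns_def
  by (force dest: closedin_subset simp: PiE_iff)

lemma restrict_restr_pat: "B' \<subseteq> B \<Longrightarrow> restr_pat x B |` B' = restr_pat x B'"
  unfolding restr_pat_def restrict_map_def by (intro ext) auto

lemma finite_patterns_card_le:
  assumes "finite A" "finite B"
  shows "finite (patterns A B)" "card (patterns A B) \<le> card A ^ card B"
proof -
  have sub: "patterns A B \<subseteq> (\<lambda>f. restr_pat f B) ` PiE B (\<lambda>_. A)"
  proof
    fix a assume "a \<in> patterns A B"
    then obtain x where x: "a = restr_pat x B" "range x \<subseteq> A" by (auto simp: patterns_def)
    then have "a = restr_pat (restrict x B) B" by (auto simp: restr_pat_def)
    moreover have "restrict x B \<in> PiE B (\<lambda>_. A)" using x by auto
    ultimately show "a \<in> (\<lambda>f. restr_pat f B) ` PiE B (\<lambda>_. A)" by blast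
  qed
  have fin: "finite (PiE B (\<lambda>_. A))" using assms by (simp add: finite_PiE)
  then show "finite (patterns A B)" using sub finite_subset by blast
  have "card (patterns A B) \<le> card (PiE B (\<lambda>_. A))"
    using sub fin by (meson card_image_le card_mono finite_imageI order_trans)
  also have "\<dots> = card A ^ card B" using assms by (simp add: card_PiE)
  finally show "card (patterns A B) \<le> card A ^ card B" .
qed

lemma not_clash_pat_shift_iff:
  "\<not> clash (restr_pat x B) (pat_shift \<gamma> (restr_pat x B)) \<longleftrightarrow>
     (\<forall>\<delta>\<in>B. \<gamma> + \<delta> \<in> B \<longrightarrow> x \<delta> = x (\<gamma> + \<delta>))"
  unfolding clash_def pat_shift_def restr_pat_def dom_def by auto

lemma periodic_eq_if_eq_on_cube_frame:
  fixes x y :: "int^'d \<Rightarrow> 'a"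
  assumes \<gamma>: "\<gamma> \<in> cube (- w) w" "\<gamma> \<noteq> 0"
    and x: "\<forall>\<delta>\<in>cube lo hi. \<gamma> + \<delta> \<in> cube lo hi \<longrightarrow> x \<delta> = x (\<gamma> + \<delta>)"
    and y: "\<forall>\<delta>\<in>cube lo hi. \<gamma> + \<delta> \<in> cube lo hi \<longrightarrow> y \<delta> = y (\<gamma> + \<delta>)"
    and frame: "\<forall>\<delta>\<in>cube_frame lo hi w. x \<delta> = y \<delta>"
  shows "\<forall>\<delta>\<in>cube lo hi. x \<delta> = y \<delta>"
proof (rule ccontr)
  define E where "E = {\<delta>\<in>cube lo hi. x \<delta> \<noteq> y \<delta>}"
  assume "\<not> ?thesis"
  then have "E \<noteq> {}" unfolding E_def by blast
  obtain i where "\<gamma>$i \<noteq> 0" using \<gamma>(2) by (metis vec_eq_iff zero_index)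
  define f where "f \<delta> = sgn (\<gamma>$i) * \<delta>$i" for \<delta> :: "int^'d"
  have "f (\<gamma> + \<delta>) = f \<delta> + \<bar>\<gamma>$i\<bar>" for \<delta>
    by (simp add: f_def algebra_simps abs_sgn)
  then have f_shift: "f (\<gamma> + \<delta>) > f \<delta>" for \<delta>
    using \<open>\<gamma>$i \<noteq> 0\<close> by simp
  \<comment> \<open>A disagreement site maximising \<open>f\<close> lies off the frame, so moving it by \<open>\<gamma>\<close>
    gives another one.\<close>
  have "finite E" unfolding E_def by simp
  then have "Max (f ` E) \<in> f ` E" using \<open>E \<noteq> {}\<close> by simp
  then obtain \<delta> where \<delta>: "\<delta> \<in> E" "f \<delta> = Max (f ` E)" by auto
  have "\<delta> \<in> cube (lo + w) (hi - w)"
    using \<delta>(1) frame unfolding E_def cube_frame_def by blast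
  then have "\<gamma> + \<delta> \<in> cube lo hi" by (rule add_mem_cube[OF \<gamma>(1)])
  with \<delta>(1) x y have "\<gamma> + \<delta> \<in> E" unfolding E_def by auto
  then have "f (\<gamma> + \<delta>) \<le> f \<delta>" using \<delta>(2) \<open>finite E\<close> by simp
  with f_shift show False by (meson not_le)
qed

lemma card_nonclashing_le:
  fixes P :: "((int^'d) \<rightharpoonup> 'a) set"
  assumes "finite A" "P \<subseteq> patterns A (cube lo hi)" "\<gamma> \<in> cube (- w) w" "\<gamma> \<noteq> 0"
  shows "card {a\<in>P. \<not> clash a (pat_shift \<gamma> a)}
           \<le> card A ^ card (cube_frame lo hi w :: (int^'d) set)"
proof -
  define F :: "(int^'d) set" where "F = cube_frame lo hi w"
  define Q where "Q = {a\<in>P. \<not> clash a (pat_shift \<gamma> a)}"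
  have F_sub: "F \<subseteq> cube lo hi" unfolding F_def cube_frame_def by blast
  have periodic: "\<forall>\<delta>\<in>cube lo hi. \<gamma> + \<delta> \<in> cube lo hi \<longrightarrow> x \<delta> = x (\<gamma> + \<delta>)"
    if "restr_pat x (cube lo hi) \<in> Q" for x
    using that unfolding Q_def not_clash_pat_shift_iff[symmetric] by blast
  have inj: "inj_on (\<lambda>a. a |` F) Q"
  proof (rule inj_onI)
    fix a b assume "a \<in> Q" "b \<in> Q" and eq: "a |` F = b |` F"
    obtain x y where a: "a = restr_pat x (cube lo hi)" and b: "b = restr_pat y (cube lo hi)"
      using \<open>a \<in> Q\<close> \<open>b \<in> Q\<close> assms(2) unfolding Q_def patterns_def by blast
    have "restr_pat x F = restr_pat y F"
      using eq F_sub unfolding a b by (simp add: restrict_restr_pat)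
    then have "\<forall>\<delta>\<in>cube_frame lo hi w. x \<delta> = y \<delta>"
      unfolding F_def restr_pat_def by (metis option.inject)
    with periodic \<open>a \<in> Q\<close> \<open>b \<in> Q\<close> have "\<forall>\<delta>\<in>cube lo hi. x \<delta> = y \<delta>"
      unfolding a b by (intro periodic_eq_if_eq_on_cube_frame[OF assms(3,4)])
    then show "a = b" unfolding a b restr_pat_def by auto
  qed
  have image: "(\<lambda>a. a |` F) ` Q \<subseteq> patterns A F"
  proof
    fix c assume "c \<in> (\<lambda>a. a |` F) ` Q"
    then obtain x where "c = restr_pat x (cube lo hi) |` F" "range x \<subseteq> A"
      using assms(2) unfolding Q_def patterns_def by blast
    then show "c \<in> patterns A F"
      using F_sub unfolding patterns_def by (auto simp: restrict_restr_pat)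
  qed
  have "finite F" unfolding F_def cube_frame_def by simp
  have "card Q = card ((\<lambda>a. a |` F) ` Q)"
    using inj by (simp add: card_image)
  also have "\<dots> \<le> card (patterns A F)"
    using image finite_patterns_card_le(1)[OF assms(1) \<open>finite F\<close>] by (rule card_mono[rotated])
  also have "\<dots> \<le> card A ^ card F"
    using assms(1) \<open>finite F\<close> by (rule finite_patterns_card_le(2))
  finally show ?thesis unfolding Q_def F_def .
qed

definition clashes_with_shifts :: "nat \<Rightarrow> ((int^'d) \<rightharpoonup> 'a) \<Rightarrow> bool" where
  "clashes_with_shifts r a \<longleftrightarrow>
     (\<forall>\<gamma>\<in>cube (- int r) (int r) - {0}. clash a (pat_shift \<gamma> a))"

lemma card_not_clashes_with_shifts_le:
  fixes P :: "((int^'d) \<rightharpoonup> 'a) set"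
  assumes "finite A" "P \<subseteq> patterns A (cube lo hi)"
  shows "card {a\<in>P. \<not> clashes_with_shifts r a}
           \<le> (2 * r + 1) ^ CARD('d) * card A ^ card (cube_frame lo hi (int r) :: (int^'d) set)"
proof -
  define G where "G = (cube (- int r) (int r) - {0} :: (int^'d) set)"
  have "card G \<le> card (cube (- int r) (int r) :: (int^'d) set)"
    unfolding G_def by (rule card_Diff1_le)
  also have "\<dots> = (2 * r + 1) ^ CARD('d)"
    unfolding card_cube by (simp add: nat_add_distrib nat_mult_distrib)
  finally have card_G: "card G \<le> (2 * r + 1) ^ CARD('d)" .
  have "{a\<in>P. \<not> clashes_with_shifts r a} = (\<Union>\<gamma>\<in>G. {a\<in>P. \<not> clash a (pat_shift \<gamma> a)})"
    unfolding clashes_with_shifts_def G_def by blast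
  also have "card \<dots> \<le> (\<Sum>\<gamma>\<in>G. card {a\<in>P. \<not> clash a (pat_shift \<gamma> a)})"
    unfolding G_def by (intro card_UN_le) simp
  also have "\<dots> \<le> (\<Sum>\<gamma>\<in>G. card A ^ card (cube_frame lo hi (int r) :: (int^'d) set))"
    by (intro sum_mono card_nonclashing_le[OF assms]) (auto simp: G_def)
  also have "\<dots> = card G * card A ^ card (cube_frame lo hi (int r) :: (int^'d) set)"
    by simp
  also have "\<dots> \<le> (2 * r + 1) ^ CARD('d) * card A ^ card (cube_frame lo hi (int r) :: (int^'d) set)"
    using card_G by simp
  finally show ?thesis .
qed

lemma cube_frame_power_subexponential:
  assumes "0 < \<epsilon>"
  shows "eventually (\<lambda>N. real (M * a ^ card (cube_frame 1 (int N) (int w) :: (int^'d) set))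
           \<le> exp (\<epsilon> * real N ^ CARD('d))) sequentially"
proof -
  define D where "D = CARD('d)"
  define \<alpha> where "\<alpha> = max 1 (real a)"
  define K0 where "K0 = ln (real M + 1)"
  define K1 where "K1 = 2 * real w * D * ln \<alpha>"
  have "K0 \<ge> 0" unfolding K0_def by simp
  have "eventually (\<lambda>N. max (2 * w) (max 1 (nat \<lceil>(K0 + K1) / \<epsilon>\<rceil>)) \<le> N) sequentially"
    by (rule eventually_ge_at_top)
  then show ?thesis
  proof eventually_elim
    case (elim N)
    define T where "T = real N ^ (D - 1)"
    define F where "F = card (cube_frame 1 (int N) (int w) :: (int^'d) set)"
    have "1 \<le> T" unfolding T_def using elim by simp
    have "K0 + K1 \<le> \<epsilon> * real N"
      using elim assms by (simp add: pos_divide_le_eq mult.commute real_nat_ceiling_ge)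
    have "real (M * a ^ F) \<le> (real M + 1) * \<alpha> ^ F"
      unfolding of_nat_mult of_nat_power \<alpha>_def by (intro mult_mono power_mono) auto
    also have "\<dots> = exp (K0 + real F * ln \<alpha>)"
      unfolding K0_def \<alpha>_def by (simp add: exp_add exp_of_nat_mult)
    also have "\<dots> \<le> exp (K0 + K1 * T)"
    proof -
      have "real F \<le> 2 * real w * D * T"
        using card_cube_frame_le[of w N, where 'd='d] elim unfolding F_def D_def T_def by simp
      then have "real F * ln \<alpha> \<le> (2 * real w * D * T) * ln \<alpha>"
        unfolding \<alpha>_def by (intro mult_right_mono) auto
      then show ?thesis unfolding K1_def by (simp add: mult_ac)
    qed
    also have "\<dots> \<le> exp ((K0 + K1) * T)"
      using \<open>1 \<le> T\<close> \<open>K0 \<ge> 0\<close> by (simp add: distrib_right mult_le_cancel_left1)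
    also have "\<dots> \<le> exp (\<epsilon> * real N * T)"
      using \<open>K0 + K1 \<le> \<epsilon> * real N\<close> \<open>1 \<le> T\<close> by (simp add: mult_right_mono)
    also have "\<epsilon> * real N * T = \<epsilon> * real N ^ D"
      unfolding T_def D_def by (simp add: power_eq_if)
    finally show ?case unfolding F_def D_def .
  qed
qed

definition entropy_term :: "nat \<Rightarrow> (nat \<Rightarrow> ((int^'d) \<rightharpoonup> 'a) set) \<Rightarrow> nat \<Rightarrow> ereal" where
  "entropy_term k C n = (if C n = {} then - \<infinity>
     else ereal (ln (real (card (C n))) / real (n * k) ^ CARD('d)))"

lemma coll_entropy_eq_liminf: "coll_entropy k C = liminf (entropy_term k C)"
  unfolding coll_entropy_def entropy_term_def[abs_def] ..

lemma ereal_less_entropy_term_iff: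
  fixes C :: "nat \<Rightarrow> ((int^'d) \<rightharpoonup> 'a) set"
  assumes "finite (C n)" "0 < real (n * k) ^ CARD('d)"
  shows "ereal h < entropy_term k C n \<longleftrightarrow> exp (h * real (n * k) ^ CARD('d)) < real (card (C n))"
proof (cases "C n = {}")
  case False
  then have "0 < real (card (C n))" using assms(1) by (simp add: card_gt_0_iff)
  then show ?thesis
    using False assms(2) by (simp add: entropy_term_def pos_less_divide_eq ln_less_cancel_iff[symmetric])
qed (simp add: entropy_term_def)

lemma coll_entropy_mono:
  assumes "\<And>n. C' n \<subseteq> C n" "\<And>n. finite (C n)"
  shows "coll_entropy k C' \<le> coll_entropy k C"
  unfolding coll_entropy_eq_liminf
proof (intro Liminf_mono always_eventually allI)
  fix n
  show "entropy_term k C' n \<le> entropy_term k C n"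
  proof (cases "C' n = {}")
    case False
    have "finite (C' n)" using assms finite_subset by blast
    then have "0 < card (C' n)" "card (C' n) \<le> card (C n)"
      using False assms by (auto simp: card_gt_0_iff card_mono)
    then show ?thesis
      using False assms(1)[of n] by (auto simp: entropy_term_def divide_right_mono)
  qed (simp add: entropy_term_def)
qed

lemma coll_entropy_ge_if_card_diff_subexponential:
  fixes C C' :: "nat \<Rightarrow> ((int^'d) \<rightharpoonup> 'a) set"
  assumes "1 \<le> k" "0 < coll_entropy k C" "\<And>n. finite (C n)" "\<And>n. C' n \<subseteq> C n"
    and small: "\<And>\<epsilon>. 0 < \<epsilon> \<Longrightarrow> eventually (\<lambda>n.
       real (card (C n - C' n)) \<le> exp (\<epsilon> * real (n * k) ^ CARD('d))) sequentially"
  shows "coll_entropy k C \<le> coll_entropy k C'"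
proof -
  define V where "V n = real (n * k) ^ CARD('d)" for n
  have "real n \<le> V n" for n
  proof (cases "n = 0")
    case False
    then have "n \<le> n * k" "1 \<le> n * k" using assms(1) by auto
    then have "real n \<le> real (n * k)" "1 \<le> real (n * k)"
      by (simp only: of_nat_le_iff, metis of_nat_1 of_nat_le_iff)
    then show ?thesis unfolding V_def by (meson order_trans self_le_power zero_less_card_finite)
  qed (simp add: V_def)
  then have V_at_top: "filterlim V at_top sequentially"
    by (intro filterlim_at_top_mono[OF filterlim_real_sequentially] always_eventually) auto
  show ?thesis
    unfolding coll_entropy_eq_liminf le_Liminf_iff
  proof (intro allI impI)
    fix y assume "y < liminf (entropy_term k C)"
    with assms(2) have "max y 0 < liminf (entropy_term k C)"
      unfolding coll_entropy_eq_liminf by simp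
    then obtain h1 where h1: "max y 0 < ereal h1" "ereal h1 < liminf (entropy_term k C)"
      using ereal_dense2 by blast
    then obtain h where "max y 0 < ereal h" "ereal h < ereal h1"
      using ereal_dense2 by blast
    then have "y < ereal h" "0 < h" "h < h1" by auto
    have "eventually (\<lambda>n. ereal h1 < entropy_term k C n) sequentially"
      using h1(2) by (rule less_LiminfD)
    moreover have "eventually (\<lambda>n. real (card (C n - C' n)) \<le> exp (h * V n)) sequentially"
      using small[OF \<open>0 < h\<close>] unfolding V_def .
    moreover have "eventually (\<lambda>n. max 1 (ln 2 / (h1 - h)) \<le> V n) sequentially"
      using V_at_top by (simp only: filterlim_at_top)
    ultimately show "eventually (\<lambda>n. y < entropy_term k C' n) sequentially"
    proof eventually_elim
      case (elim n)
      have "0 < V n" "ln 2 \<le> (h1 - h) * V n"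
        using elim(3) \<open>h < h1\<close> by (auto simp: pos_divide_le_eq mult.commute)
      have "finite (C' n)" using assms(3,4) finite_subset by blast
      have "exp (h1 * V n) < real (card (C n))"
        using elim(1) ereal_less_entropy_term_iff[where C=C and n=n, OF assms(3)] \<open>0 < V n\<close> unfolding V_def by blast
      moreover have "2 * exp (h * V n) \<le> exp (h1 * V n)"
      proof -
        have "2 * exp (h * V n) \<le> exp ((h1 - h) * V n) * exp (h * V n)"
          using \<open>ln 2 \<le> (h1 - h) * V n\<close> by (metis exp_ln exp_le_cancel_iff mult_right_mono exp_ge_zero zero_less_numeral)
        then show ?thesis by (simp add: exp_add[symmetric] algebra_simps)
      qed
      moreover have "real (card (C n)) = real (card (C' n)) + real (card (C n - C' n))"
        using \<open>finite (C' n)\<close> assms(3,4)[of n] by (simp add: card_Diff_subset card_mono)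
      ultimately have "exp (h * V n) < real (card (C' n))"
        using elim(2) by linarith
      then have "ereal h < entropy_term k C' n"
        using ereal_less_entropy_term_iff[where C=C' and n=n, OF \<open>finite (C' n)\<close>] \<open>0 < V n\<close> unfolding V_def by blast
      with \<open>y < ereal h\<close> show ?case by (rule less_trans)
    qed
  qed
qed

theorem lemma8p2:
  fixes A :: "'a set" and X :: "((int^'d) \<Rightarrow> 'a) set"
    and C :: "nat \<Rightarrow> ((int^'d) \<rightharpoonup> 'a) set" and k r :: nat
  assumes "shift_space A X"
    and "k \<ge> 1"
    and "\<And>n. C n \<subseteq> lang X (cube 1 (int (n * k)) :: (int^'d) set)"
    and "coll_entropy k C > 0"
  shows "\<exists>C' :: nat \<Rightarrow> ((int^'d) \<rightharpoonup> 'a) set.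
           (\<forall>n. C' n \<subseteq> C n) \<and> coll_entropy k C' = coll_entropy k C \<and>
           (\<forall>n. \<forall>a\<in>C' n. \<forall>\<gamma>\<in>(cube (- int r) (int r) :: (int^'d) set) - {0}.
               clash a (pat_shift \<gamma> a))"
proof -
  define C' where "C' n = {a\<in>C n. clashes_with_shifts r a}" for n
  define bound where "bound N = (2 * r + 1) ^ CARD('d) *
    card A ^ card (cube_frame 1 (int N) (int r) :: (int^'d) set)" for N
  have "finite A" using assms(1) unfolding shift_space_def by blast
  have pat: "C n \<subseteq> patterns A (cube 1 (int (n * k)))" for n
    using assms(3) lang_subset_patterns[OF assms(1)] by blast
  then have fin: "finite (C n)" for n
    using finite_patterns_card_le(1)[OF \<open>finite A\<close> finite_cube] finite_subset by blast
  have "C n - C' n = {a\<in>C n. \<not> clashes_with_shifts r a}" for n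
    unfolding C'_def by blast
  then have removed: "card (C n - C' n) \<le> bound (n * k)" for n
    unfolding bound_def using card_not_clashes_with_shifts_le[OF \<open>finite A\<close> pat] by simp
  have "eventually (\<lambda>n. real (card (C n - C' n)) \<le> exp (\<epsilon> * real (n * k) ^ CARD('d))) sequentially"
    if "0 < \<epsilon>" for \<epsilon>
  proof -
    have "eventually (\<lambda>N. real (bound N) \<le> exp (\<epsilon> * real N ^ CARD('d))) sequentially"
      unfolding bound_def by (rule cube_frame_power_subexponential[OF that])
    then have "eventually (\<lambda>n. real (bound (n * k)) \<le> exp (\<epsilon> * real (n * k) ^ CARD('d))) sequentially"
      using assms(2) by (intro eventually_compose_filterlim[OF _ mult_nat_right_at_top]) auto
    then show ?thesis
      by (rule eventually_mono) (use removed of_nat_mono order_trans in blast)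
  qed
  moreover have sub: "\<forall>n. C' n \<subseteq> C n" unfolding C'_def by blast
  ultimately have "coll_entropy k C' = coll_entropy k C"
    using coll_entropy_mono[of C' C] coll_entropy_ge_if_card_diff_subexponential[of k C C']
      assms(2,4) fin by (intro antisym) auto
  moreover have "\<forall>n. \<forall>a\<in>C' n. clashes_with_shifts r a" unfolding C'_def by blast
  ultimately show ?thesis
    using sub unfolding clashes_with_shifts_def by blast
qed

end
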